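(* Let $r\ge 2$, $\alpha=2^r-1$, $\beta=2^{r-1}(2^r-1)$, let $\mathcal{C}\subseteq\mathbb{Z}_2^\alpha\times\mathbb{Z}_4^\beta$ be a $\mathbb{Z}_2\mathbb{Z}_4$-additive 1-perfect code and $D=\mathcal{C}^\perp$, and assume $D$ is $\mathbb{Z}_2\mathbb{Z}_4$-cyclic. Let $\mathbf{z}=(x\mid y)\in D$ with $x\in\mathbb{Z}_2^\alpha$, $y\in\mathbb{Z}_4^\beta$, be a codeword of order 4 (i.e. $2\mathbf{z}\neq 0$). Then $y$ has exactly $2^{2r-2}$ coordinates in $\{1,3\}$, exactly $2^{r-2}(2^{r-1}-1)$ coordinates equal to $2$, and exactly $2^{r-2}(2^{r-1}-1)$ coordinates equal to $0$.
   Context: A $\mathbb{Z}_2\mathbb{Z}_4$-additive code is an additive subgroup of $\mathbb{Z}_2^\alpha\times\mathbb{Z}_4^\beta$; vectors are $(u\mid u')$ with $u\in\mathbb{Z}_2^\alpha$, $u'\in\mathbb{Z}_4^\beta$. The Gray map $\phi:\mathbb{Z}_4\to\mathbb{Z}_2^2$ is $0\mapsto(0,0),1\mapsto(0,1),2\mapsto(1,1),3\mapsto(1,0)$, $\Phi(u\mid u')=(u\mid\phi(u'_1),\dots,\phi(u'_\beta))$. A binary code $C\subseteq\mathbb{Z}_2^n$ is 1-perfect if the Hamming balls of radius 1 around its codewords partition $\mathbb{Z}_2^n$; a $\mathbb{Z}_2\mathbb{Z}_4$-additive code is 1-perfect if its Gray image is. The dual is $\mathcal{C}^\perp=\{\mathbf{v}:\mathbf{u}\cdot\mathbf{v}=0\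 \forall\mathbf{u}\in\mathcal{C}\}$ with $\mathbf{u}\cdot\mathbf{v}=2\sum_{i=1}^\alpha u_iv_i+\sum_{j=1}^\beta u'_jv'_j\in\mathbb{Z}_4$. With $\sigma(v_1,\dots,v_m)=(v_m,v_1,\dots,v_{m-1})$ and $\sigma(u\mid u')=(\sigma(u)\mid\sigma(u'))$, a code is $\mathbb{Z}_2\mathbb{Z}_4$-cyclic if closed under $\sigma$. *)

theory Defs
  imports Main
begin

definition Z2vecs :: "nat \<Rightarrow> int list set" where
  "Z2vecs n = {u. length u = n \<and> set u \<subseteq> {0,1}}"

definition Z4vecs :: "nat \<Rightarrow> int list set" where
  "Z4vecs n = {u. length u = n \<and> set u \<subseteq> {0,1,2,3}}"

definition Z2Z4space :: "nat \<Rightarrow> nat \<Rightarrow> (int list \<times> int list) set" where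
  "Z2Z4space a b = Z2vecs a \<times> Z4vecs b"

definition z24_zero :: "nat \<Rightarrow> nat \<Rightarrow> int list \<times> int list" where
  "z24_zero a b = (replicate a 0, replicate b 0)"

definition z24_add :: "int list \<times> int list \<Rightarrow> int list \<times> int list \<Rightarrow> int list \<times> int list" where
  "z24_add v w = (map2 (\<lambda>x y. (x + y) mod 2) (fst v) (fst w),
                  map2 (\<lambda>x y. (x + y) mod 4) (snd v) (snd w))"

definition z24_neg :: "int list \<times> int list \<Rightarrow> int list \<times> int list" where
  "z24_neg v = (map (\<lambda>x. (- x) mod 2) (fst v), map (\<lambda>x. (- x) mod 4) (snd v))"

definition Z2Z4_additive :: "nat \<Rightarrow> nat \<Rightarrow> (int list \<times> int list) set \<Rightarrow> bool" where
  "Z2Z4_additive a b C \<longleftrightarrow> C \<subseteq> Z2Z4space a b \<and> z24_zero a b \<in> C \<and>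
     (\<forall>v\<in>C. \<forall>w\<in>C. z24_add v w \<in> C) \<and> (\<forall>v\<in>C. z24_neg v \<in> C)"

definition z24_inner :: "int list \<times> int list \<Rightarrow> int list \<times> int list \<Rightarrow> int" where
  "z24_inner v w = (2 * (\<Sum>i<length (fst v). fst v ! i * fst w ! i)
                    + (\<Sum>j<length (snd v). snd v ! j * snd w ! j)) mod 4"

definition Z2Z4_dual :: "nat \<Rightarrow> nat \<Rightarrow> (int list \<times> int list) set \<Rightarrow> (int list \<times> int list) set" where
  "Z2Z4_dual a b C = {v \<in> Z2Z4space a b. \<forall>u\<in>C. z24_inner u v = 0}"

definition gray :: "int \<Rightarrow> int list" where
  "gray x = (if x = 0 then [0,0] else if x = 1 then [0,1] else if x = 2 then [1,1] else [1,0])"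

definition Gray :: "int list \<times> int list \<Rightarrow> int list" where
  "Gray v = fst v @ concat (map gray (snd v))"

definition hamming :: "int list \<Rightarrow> int list \<Rightarrow> nat" where
  "hamming x y = card {i. i < length x \<and> x ! i \<noteq> y ! i}"

definition perfect1 :: "nat \<Rightarrow> int list set \<Rightarrow> bool" where
  "perfect1 n B \<longleftrightarrow> B \<subseteq> Z2vecs n \<and> (\<forall>x\<in>Z2vecs n. \<exists>!c. c \<in> B \<and> hamming x c \<le> 1)"

definition Z2Z4_perfect1 :: "nat \<Rightarrow> nat \<Rightarrow> (int list \<times> int list) set \<Rightarrow> bool" where
  "Z2Z4_perfect1 a b C \<longleftrightarrow> perfect1 (a + 2 * b) (Gray ` C)"

definition shiftr :: "int list \<Rightarrow> int list" where
  "shiftr xs = (if xs = [] then [] else last xs # butlast xs)"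

definition Z2Z4_cyclic :: "(int list \<times> int list) set \<Rightarrow> bool" where
  "Z2Z4_cyclic C \<longleftrightarrow> (\<forall>v\<in>C. (shiftr (fst v), shiftr (snd v)) \<in> C)"

end

theory Submission
  imports Defs Complex_Main
begin

text \<open>Let \<open>\<chi>(v) = \<i>^\<langle>v, z\<rangle>\<close> for the dual codeword \<open>z = (x | y)\<close>. Both \<open>\<chi>\<close> and
\<open>\<chi>\<^sup>2\<close> are characters of \<open>\<int>\<^sub>2\<^sup>\<alpha> \<times> \<int>\<^sub>4\<^sup>\<beta>\<close> that are trivial on \<open>C\<close>; since \<open>z\<close> has order 4,
some \<open>y\<^sub>j\<close> is odd, which makes both non-trivial, so their sums over the whole space vanish.
The Gray map turns Hamming distance into Lee distance, so 1-perfectness says that every vector is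
uniquely \<open>c + e\<close> with \<open>c \<in> C\<close> and \<open>e\<close> in the Lee ball of radius 1 about 0, which consists of 0,
the binary unit vectors and the vectors \<open>\<plusminus>1\<close> at a single quaternary coordinate. Hence the sums
of \<open>\<chi>\<close> and \<open>\<chi>\<^sup>2\<close> over this ball vanish. Likewise \<open>{v. 2v \<in> C}\<close> is \<open>C\<close> plus the binary part
of the ball, and \<open>\<chi>\<close> is non-trivial on it (it is \<open>-1\<close> at the vector with a single entry 2 at
an odd coordinate of \<open>y\<close>), so the sum of \<open>\<chi>\<close> over the binary part vanishes too. Evaluating the
three sums coordinatewise gives \<open>n\<^sub>0 = n\<^sub>2\<close> and \<open>4 n\<^sub>o\<^sub>d\<^sub>d = 1 + \<alpha> + 2\<beta>\<close>, which together
with \<open>n\<^sub>0 + n\<^sub>o\<^sub>d\<^sub>d + n\<^sub>2 = \<beta>\<close> determine the counts.\<close>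

lemma mem_Z2Z4space_iff:
  "v \<in> Z2Z4space a b \<longleftrightarrow> length (fst v) = a \<and> (\<forall>i<a. fst v ! i \<in> {0,1})
      \<and> length (snd v) = b \<and> (\<forall>j<b. snd v ! j \<in> {0,1,2,3})"
  unfolding Z2Z4space_def Z2vecs_def Z4vecs_def by (cases v) (auto simp: set_conv_nth)

lemma z24_add_commute: "z24_add v w = z24_add w v"
  unfolding z24_add_def by (auto simp: list_eq_iff_nth_eq add.commute)

lemma z24_add_assoc: "z24_add (z24_add u v) w = z24_add u (z24_add v w)"
  unfolding z24_add_def
  by (auto simp: list_eq_iff_nth_eq mod_add_left_eq mod_add_right_eq add.assoc)

interpretation z24: abel_semigroup z24_add
  by unfold_locales (fact z24_add_assoc, fact z24_add_commute)

lemma z24_add_zero_left: "v \<in> Z2Z4space a b \<Longrightarrow> z24_add (z24_zero a b) v = v"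
  unfolding mem_Z2Z4space_iff z24_add_def z24_zero_def
  by (cases v) (auto simp: list_eq_iff_nth_eq)

lemma z24_add_neg_left: "v \<in> Z2Z4space a b \<Longrightarrow> z24_add (z24_neg v) v = z24_zero a b"
  unfolding mem_Z2Z4space_iff z24_add_def z24_zero_def z24_neg_def
  by (cases v) (auto simp: list_eq_iff_nth_eq mod_add_right_eq)

lemma z24_add_closed: "v \<in> Z2Z4space a b \<Longrightarrow> w \<in> Z2Z4space a b \<Longrightarrow> z24_add v w \<in> Z2Z4space a b"
  unfolding mem_Z2Z4space_iff z24_add_def by auto

lemma z24_neg_closed: "v \<in> Z2Z4space a b \<Longrightarrow> z24_neg v \<in> Z2Z4space a b"
  unfolding mem_Z2Z4space_iff z24_neg_def by auto

lemma z24_zero_closed: "z24_zero a b \<in> Z2Z4space a b"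
  unfolding mem_Z2Z4space_iff z24_zero_def by auto

abbreviation z24_diff :: "int list \<times> int list \<Rightarrow> int list \<times> int list \<Rightarrow> int list \<times> int list" where
  "z24_diff v w \<equiv> z24_add v (z24_neg w)"

lemma z24_neg_add_cancel_left:
  "c \<in> Z2Z4space a b \<Longrightarrow> v \<in> Z2Z4space a b \<Longrightarrow> z24_add (z24_neg c) (z24_add c v) = v"
  by (simp add: z24_add_assoc[symmetric] z24_add_neg_left z24_add_zero_left)

lemma z24_add_neg_cancel_left:
  "c \<in> Z2Z4space a b \<Longrightarrow> v \<in> Z2Z4space a b \<Longrightarrow> z24_add c (z24_add (z24_neg c) v) = v"
  by (metis z24_add_neg_left z24_add_zero_left z24.assoc z24.commute)

lemma z24_add_diff_cancel_left:
  "c \<in> Z2Z4space a b \<Longrightarrow> v \<in> Z2Z4space a b \<Longrightarrow> z24_diff (z24_add c v) c = v"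
  by (simp add: z24_add_commute[of _ "z24_neg c"] z24_neg_add_cancel_left)

lemma z24_add_diff_cancel:
  "c \<in> Z2Z4space a b \<Longrightarrow> v \<in> Z2Z4space a b \<Longrightarrow> z24_add c (z24_diff v c) = v"
  by (simp add: z24_add_commute[of v] z24_add_neg_cancel_left)

lemma z24_double_add: "z24_add (z24_add v w) (z24_add v w) = z24_add (z24_add v v) (z24_add w w)"
  by (simp add: z24.assoc z24.left_commute)

lemma finite_Z2Z4space: "finite (Z2Z4space a b)"
proof -
  have "Z2vecs a = {xs. set xs \<subseteq> {0,1} \<and> length xs = a}"
    and "Z4vecs b = {xs. set xs \<subseteq> {0,1,2,3} \<and> length xs = b}"
    by (auto simp: Z2vecs_def Z4vecs_def)
  then show ?thesis
    by (simp add: Z2Z4space_def finite_lists_length_eq)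
qed

lemma z24_add_left_cancel:
  assumes "s \<in> Z2Z4space a b" "v \<in> Z2Z4space a b" "w \<in> Z2Z4space a b" "z24_add s v = z24_add s w"
  shows "v = w"
proof -
  have "z24_add (z24_neg s) (z24_add s v) = z24_add (z24_neg s) (z24_add s w)"
    using assms(4) by simp
  with assms(1-3) show ?thesis
    by (simp add: z24_neg_add_cancel_left)
qed

lemma sum_translation_invariant_eq_0:
  fixes f :: "int list \<times> int list \<Rightarrow> 'a::idom"
  assumes S: "S \<subseteq> Z2Z4space a b" and s: "s \<in> Z2Z4space a b"
    and closed: "\<And>v. v \<in> S \<Longrightarrow> z24_add s v \<in> S"
    and mult: "\<And>v. v \<in> S \<Longrightarrow> f (z24_add s v) = f s * f v"
    and nontrivial: "f s \<noteq> 1"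
  shows "sum f S = 0"
proof -
  have "inj_on (z24_add s) S"
  proof (rule inj_onI)
    fix v w assume "v \<in> S" "w \<in> S" "z24_add s v = z24_add s w"
    with S show "v = w" by (auto intro!: z24_add_left_cancel[OF s, of v w])
  qed
  moreover have "finite S"
    using S finite_Z2Z4space by (rule finite_subset)
  ultimately have "z24_add s ` S = S"
    using closed by (intro endo_inj_surj) auto
  then have "sum f S = sum (f \<circ> z24_add s) S"
    using sum.reindex[OF \<open>inj_on (z24_add s) S\<close>, of f] by simp
  also have "\<dots> = f s * sum f S"
    using mult by (simp add: sum_distrib_left)
  finally have "(1 - f s) * sum f S = 0"
    by (simp add: algebra_simps)
  with nontrivial show ?thesis by simp
qed

lemma hamming_Nil [simp]: "hamming [] ys = 0"
  by (simp add: hamming_def)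

lemma hamming_Cons [simp]: "hamming (u # xs) (v # ys) = (if u = v then 0 else 1) + hamming xs ys"
proof -
  have "{i. i < length (u # xs) \<and> (u # xs) ! i \<noteq> (v # ys) ! i}
      = (if u = v then {} else {0}) \<union> Suc ` {i. i < length xs \<and> xs ! i \<noteq> ys ! i}"
    by (auto simp: less_Suc_eq_0_disj)
  then show ?thesis
    unfolding hamming_def by (simp add: card_image)
qed

lemma hamming_append:
  "length xs = length xs' \<Longrightarrow> hamming (xs @ ys) (xs' @ ys') = hamming xs xs' + hamming ys ys'"
  by (induction xs xs' rule: list_induct2) simp_all

definition lee_weight_Z4 :: "int \<Rightarrow> nat" where
  "lee_weight_Z4 k = (if k = 0 then 0 else if k = 2 then 2 else 1)"

lemma lee_weight_Z4_eq_0_iff [simp]: "lee_weight_Z4 k = 0 \<longleftrightarrow> k = 0"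
  by (simp add: lee_weight_Z4_def)

definition lee_weight :: "int list \<times> int list \<Rightarrow> nat" where
  "lee_weight v = card {i. i < length (fst v) \<and> fst v ! i \<noteq> 0}
                  + (\<Sum>j<length (snd v). lee_weight_Z4 (snd v ! j))"

lemma length_concat_map_gray: "length (concat (map gray u)) = 2 * length u"
  by (induction u) (simp_all add: gray_def)

lemma hamming_gray:
  "p \<in> {0,1,2,3} \<Longrightarrow> q \<in> {0,1,2,3} \<Longrightarrow> hamming (gray p) (gray q) = lee_weight_Z4 ((p - q) mod 4)"
  by (auto simp: gray_def lee_weight_Z4_def)

lemma hamming_concat_gray:
  "length u = length w \<Longrightarrow> set u \<subseteq> {0,1,2,3} \<Longrightarrow> set w \<subseteq> {0,1,2,3} \<Longrightarrow>
   hamming (concat (map gray u)) (concat (map gray w))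
     = (\<Sum>j<length u. lee_weight_Z4 ((u ! j - w ! j) mod 4))"
proof (induction u w rule: list_induct2)
  case (Cons p u q w)
  have "length (gray p) = length (gray q)" by (simp add: gray_def)
  then show ?case
    using Cons
    by (simp add: hamming_append hamming_gray sum.lessThan_Suc_shift del: hamming_Cons sum.lessThan_Suc)
qed simp

lemma Gray_isometry:
  assumes "v \<in> Z2Z4space a b" "w \<in> Z2Z4space a b"
  shows "hamming (Gray v) (Gray w) = lee_weight (z24_diff v w)"
proof -
  have bit: "fst (z24_diff v w) ! i \<noteq> 0 \<longleftrightarrow> fst v ! i \<noteq> fst w ! i" if "i < a" for i
  proof -
    have "fst v ! i = 0 \<or> fst v ! i = 1" "fst w ! i = 0 \<or> fst w ! i = 1"
      and "length (fst v) = a" "length (fst w) = a"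
      using that assms by (auto simp: mem_Z2Z4space_iff)
    then show ?thesis
      using that by (elim disjE) (simp_all add: z24_add_def z24_neg_def)
  qed
  have "{i. i < length (fst v) \<and> fst v ! i \<noteq> fst w ! i}
      = {i. i < a \<and> fst (z24_diff v w) ! i \<noteq> 0}"
    using assms bit unfolding mem_Z2Z4space_iff by auto
  moreover have "(\<Sum>j<b. lee_weight_Z4 ((snd v ! j - snd w ! j) mod 4))
      = (\<Sum>j<b. lee_weight_Z4 (snd (z24_diff v w) ! j))"
    using assms unfolding mem_Z2Z4space_iff
    by (intro sum.cong) (auto simp: z24_add_def z24_neg_def mod_add_right_eq)
  moreover have "hamming (Gray v) (Gray w) = hamming (fst v) (fst w)
      + (\<Sum>j<b. lee_weight_Z4 ((snd v ! j - snd w ! j) mod 4))"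
  proof -
    have "set (snd v) \<subseteq> {0,1,2,3}" "set (snd w) \<subseteq> {0,1,2,3}"
      using assms by (auto simp: Z2Z4space_def Z4vecs_def)
    then show ?thesis
      using assms unfolding Gray_def mem_Z2Z4space_iff
      by (simp add: hamming_append hamming_concat_gray)
  qed
  ultimately show ?thesis
    using assms unfolding lee_weight_def hamming_def mem_Z2Z4space_iff
    by (simp add: z24_add_def z24_neg_def)
qed

lemma z24_inner_eq:
  "v \<in> Z2Z4space a b \<Longrightarrow>
   z24_inner v z = (2 * (\<Sum>i<a. fst v ! i * fst z ! i) + (\<Sum>j<b. snd v ! j * snd z ! j)) mod 4"
  by (simp add: z24_inner_def mem_Z2Z4space_iff)

lemma z24_inner_add_left:
  assumes v: "v \<in> Z2Z4space a b" and w: "w \<in> Z2Z4space a b"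
  shows "z24_inner (z24_add v w) z = (z24_inner v z + z24_inner w z) mod 4"
proof -
  define P where "P u = 2 * (\<Sum>i<a. fst u ! i * fst z ! i) + (\<Sum>j<b. snd u ! j * snd z ! j)" for u
  have carry2: "2 * ((s mod 2) - s) = 4 * - (s div 2)"
    and carry4: "s mod 4 - s = 4 * - (s div 4)" for s :: int
    using minus_mod_eq_mult_div[of s 2] minus_mod_eq_mult_div[of s 4] by simp_all
  have "P (z24_add v w) - (P v + P w)
      = (\<Sum>i<a. 2 * ((fst v ! i + fst w ! i) mod 2 - (fst v ! i + fst w ! i)) * fst z ! i)
        + (\<Sum>j<b. ((snd v ! j + snd w ! j) mod 4 - (snd v ! j + snd w ! j)) * snd z ! j)"
    using v w unfolding P_def mem_Z2Z4space_iff
    by (simp add: z24_add_def sum_distrib_left sum_subtractf[symmetric] sum.distrib[symmetric]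
        algebra_simps)
  also have "4 dvd \<dots>"
    by (intro dvd_add dvd_sum) (simp_all only: carry2 carry4 mult.assoc dvd_triv_left)
  finally have "P (z24_add v w) mod 4 = (P v + P w) mod 4"
    by (simp add: mod_eq_dvd_iff)
  moreover have "z24_inner u z = P u mod 4" if "u \<in> Z2Z4space a b" for u
    using z24_inner_eq[OF that] by (simp add: P_def)
  ultimately show ?thesis
    using v w z24_add_closed[OF v w] by (simp add: mod_add_eq)
qed

lemma i_power_mod4: "\<i> ^ (n mod 4) = \<i> ^ n"
proof -
  have "\<i> ^ n = \<i> ^ (4 * (n div 4) + n mod 4)"
    by simp
  also have "\<dots> = (\<i> ^ 4) ^ (n div 4) * \<i> ^ (n mod 4)"
    by (simp only: power_add power_mult)
  finally show ?thesis by simp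
qed

definition z24_char :: "int list \<times> int list \<Rightarrow> int list \<times> int list \<Rightarrow> complex" where
  "z24_char z v = \<i> ^ nat (z24_inner v z)"

lemma z24_char_add:
  assumes "v \<in> Z2Z4space a b" "w \<in> Z2Z4space a b"
  shows "z24_char z (z24_add v w) = z24_char z v * z24_char z w"
proof -
  have nonneg: "0 \<le> z24_inner u z" for u
    by (simp add: z24_inner_def)
  have "nat (z24_inner (z24_add v w) z) = (nat (z24_inner v z) + nat (z24_inner w z)) mod 4"
    using assms nonneg by (simp add: z24_inner_add_left nat_mod_distrib nat_add_distrib)
  then show ?thesis
    by (simp add: z24_char_def i_power_mod4 power_add)
qed

lemma z24_char_dual: "z \<in> Z2Z4_dual a b C \<Longrightarrow> c \<in> C \<Longrightarrow> z24_char z c = 1"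
  by (simp add: Z2Z4_dual_def z24_char_def)

locale Z2Z4_space =
  fixes a b :: nat
begin

abbreviation V :: "(int list \<times> int list) set" where
  "V \<equiv> Z2Z4space a b"

lemma Z2Z4space_eqI:
  assumes "v \<in> V" "w \<in> V" "\<And>i. i < a \<Longrightarrow> fst v ! i = fst w ! i" "\<And>j. j < b \<Longrightarrow> snd v ! j = snd w ! j"
  shows "v = w"
  using assms unfolding mem_Z2Z4space_iff by (cases v, cases w) (auto simp: list_eq_iff_nth_eq)

definition unit2 :: "nat \<Rightarrow> int list \<times> int list" where
  "unit2 i = ((replicate a 0)[i := 1], replicate b 0)"

definition unit4 :: "int \<Rightarrow> nat \<Rightarrow> int list \<times> int list" where
  "unit4 k j = (replicate a 0, (replicate b 0)[j := k])"

definition ball1 :: "(int list \<times> int list) set" where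
  "ball1 = {v \<in> V. lee_weight v \<le> 1}"

lemma unit2_closed: "i < a \<Longrightarrow> unit2 i \<in> V"
  by (auto simp: mem_Z2Z4space_iff unit2_def nth_list_update)

lemma unit4_closed: "j < b \<Longrightarrow> k \<in> {0,1,2,3} \<Longrightarrow> unit4 k j \<in> V"
  by (auto simp: mem_Z2Z4space_iff unit4_def nth_list_update)

lemma fst_unit2: "fst (unit2 i) ! i' = (if i' = i \<and> i < a then 1 else 0)" if "i' < a"
  using that by (simp add: unit2_def nth_list_update)

lemma snd_unit4: "snd (unit4 k j) ! j' = (if j' = j \<and> j < b then k else 0)" if "j' < b"
  using that by (simp add: unit4_def nth_list_update)

lemma snd_unit2: "snd (unit2 i) = replicate b 0"
  and fst_unit4: "fst (unit4 k j) = replicate a 0"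
  by (simp_all add: unit2_def unit4_def)

lemma unit2_eqI:
  assumes "v \<in> V" "i < a" "fst v ! i = 1" "\<And>i'. i' < a \<Longrightarrow> i' \<noteq> i \<Longrightarrow> fst v ! i' = 0"
    and "\<And>j. j < b \<Longrightarrow> snd v ! j = 0"
  shows "v = unit2 i"
  using assms by (intro Z2Z4space_eqI[OF assms(1) unit2_closed]) (auto simp: fst_unit2 snd_unit2)

lemma unit4_eqI:
  assumes "v \<in> V" "j < b" "k \<in> {0,1,2,3}" "\<And>i. i < a \<Longrightarrow> fst v ! i = 0"
    and "snd v ! j = k" "\<And>j'. j' < b \<Longrightarrow> j' \<noteq> j \<Longrightarrow> snd v ! j' = 0"
  shows "v = unit4 k j"
  using assms by (intro Z2Z4space_eqI[OF assms(1) unit4_closed]) (auto simp: snd_unit4 fst_unit4)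

lemma lee_weight_unit2: "i < a \<Longrightarrow> lee_weight (unit2 i) = 1"
proof -
  assume "i < a"
  then have "{i'. i' < a \<and> fst (unit2 i) ! i' \<noteq> 0} = {i}"
    by (auto simp: unit2_def nth_list_update)
  then show ?thesis
    by (simp add: lee_weight_def unit2_def)
qed

lemma lee_weight_unit4: "j < b \<Longrightarrow> k \<in> {1,3} \<Longrightarrow> lee_weight (unit4 k j) = 1"
proof -
  assume "j < b" "k \<in> {1,3}"
  then have "(\<Sum>j'<b. lee_weight_Z4 (snd (unit4 k j) ! j')) = (\<Sum>j'<b. if j' = j then 1 else 0)"
    by (intro sum.cong) (auto simp: unit4_def nth_list_update lee_weight_Z4_def)
  with \<open>j < b\<close> show ?thesis
    by (simp add: lee_weight_def unit4_def)
qed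

lemma lee_weight_zero: "lee_weight (z24_zero a b) = 0"
  by (simp add: lee_weight_def z24_zero_def)

lemma lee_weight_le_1_cases:
  assumes v: "v \<in> V" and weight: "lee_weight v \<le> 1"
  shows "v = z24_zero a b \<or> (\<exists>i<a. v = unit2 i) \<or> (\<exists>j<b. \<exists>k\<in>{1,3}. v = unit4 k j)"
proof -
  let ?S = "{i. i < a \<and> fst v ! i \<noteq> 0}"
  let ?T = "\<Sum>j<b. lee_weight_Z4 (snd v ! j)"
  have weight: "card ?S + ?T \<le> 1"
    using v weight by (simp add: lee_weight_def mem_Z2Z4space_iff)
  consider "card ?S = 1" "?T = 0" | "?S = {}" "?T = 0" | "?S = {}" "?T = 1"
  proof (cases "?S = {}")
    case True
    with weight have "?T \<le> 1" by (simp only: card.empty add_0)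
    then have "?T = 0 \<or> ?T = 1" by linarith
    with True show ?thesis
      by (elim disjE) (fact that(2), fact that(3))
  next
    case False
    then have "card ?S \<noteq> 0" by simp
    with weight that(1) show ?thesis by linarith
  qed
  then show ?thesis
  proof cases
    case 1
    then obtain i where "?S = {i}" by (auto simp: card_1_singleton_iff)
    with v have "i < a" "fst v ! i = 1" "\<And>i'. i' < a \<Longrightarrow> i' \<noteq> i \<Longrightarrow> fst v ! i' = 0"
      by (auto simp: mem_Z2Z4space_iff)
    with 1 v show ?thesis
      by (auto intro: unit2_eqI)
  next
    case 2
    then have "v = z24_zero a b"
      by (intro Z2Z4space_eqI[OF v z24_zero_closed]) (auto simp: z24_zero_def)
    then show ?thesis ..
  next
    case 3
    then obtain j where j: "j < b" "lee_weight_Z4 (snd v ! j) = 1"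
      and others: "\<And>j'. j' < b \<Longrightarrow> j' \<noteq> j \<Longrightarrow> snd v ! j' = 0"
      using sum_eq_1_iff[of "{..<b}"] by auto
    with v have "snd v ! j \<in> {1,3}"
      by (auto simp: mem_Z2Z4space_iff lee_weight_Z4_def)
    moreover from this 3 v j others have "v = unit4 (snd v ! j) j"
      by (intro unit4_eqI) auto
    ultimately show ?thesis
      using j by blast
  qed
qed

lemma ball1_eq:
  "ball1 = insert (z24_zero a b) (unit2 ` {..<a} \<union> unit4 1 ` {..<b} \<union> unit4 3 ` {..<b})"
proof (intro set_eqI iffI)
  fix v assume "v \<in> ball1"
  then have "v \<in> V" "lee_weight v \<le> 1"
    by (simp_all add: ball1_def)
  from lee_weight_le_1_cases[OF this]
  show "v \<in> insert (z24_zero a b) (unit2 ` {..<a} \<union> unit4 1 ` {..<b} \<union> unit4 3 ` {..<b})"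
    by blast
next
  fix v assume "v \<in> insert (z24_zero a b) (unit2 ` {..<a} \<union> unit4 1 ` {..<b} \<union> unit4 3 ` {..<b})"
  then show "v \<in> ball1"
    by (auto simp: ball1_def lee_weight_zero lee_weight_unit2 lee_weight_unit4
        intro: z24_zero_closed unit2_closed unit4_closed)
qed

lemma unit2_inj: "inj_on unit2 {..<a}"
proof (rule inj_onI)
  fix i i' assume "i \<in> {..<a}" "i' \<in> {..<a}" "unit2 i = unit2 i'"
  then have "fst (unit2 i) ! i = fst (unit2 i') ! i" by simp
  with \<open>i \<in> {..<a}\<close> show "i = i'" by (simp add: fst_unit2 split: if_splits)
qed

lemma unit4_inj: "k \<noteq> 0 \<Longrightarrow> inj_on (unit4 k) {..<b}"
proof (rule inj_onI)
  fix j j' assume "k \<noteq> 0" "j \<in> {..<b}" "j' \<in> {..<b}" "unit4 k j = unit4 k j'"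
  then have "snd (unit4 k j) ! j = snd (unit4 k j') ! j" by simp
  with \<open>k \<noteq> 0\<close> \<open>j \<in> {..<b}\<close> show "j = j'" by (simp add: snd_unit4 split: if_splits)
qed

lemma zero_neq_unit2: "i < a \<Longrightarrow> z24_zero a b \<noteq> unit2 i"
proof
  assume "i < a" "z24_zero a b = unit2 i"
  then have "fst (z24_zero a b) ! i = fst (unit2 i) ! i" by simp
  with \<open>i < a\<close> show False by (simp add: fst_unit2 z24_zero_def)
qed

lemma unit4_3_neq_unit4_1: "j < b \<Longrightarrow> unit4 3 j' \<noteq> unit4 1 j"
proof
  assume "j < b" "unit4 3 j' = unit4 1 j"
  then have "snd (unit4 3 j') ! j = snd (unit4 1 j) ! j" by simp
  with \<open>j < b\<close> show False by (simp add: snd_unit4 split: if_splits)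
qed

definition ball1_Z2 :: "(int list \<times> int list) set" where
  "ball1_Z2 = insert (z24_zero a b) (unit2 ` {..<a})"

lemma ball1_Z2_subset: "ball1_Z2 \<subseteq> ball1"
  by (auto simp: ball1_Z2_def ball1_eq)

lemma snd_ball1_Z2: "e \<in> ball1_Z2 \<Longrightarrow> snd e = replicate b 0"
  by (auto simp: ball1_Z2_def unit2_def z24_zero_def)

lemma sum_ball1_Z2:
  fixes f :: "int list \<times> int list \<Rightarrow> 'a::comm_monoid_add"
  shows "sum f ball1_Z2 = f (z24_zero a b) + (\<Sum>i<a. f (unit2 i))"
proof -
  have "z24_zero a b \<notin> unit2 ` {..<a}"
    by (simp add: image_iff zero_neq_unit2)
  then have "sum f ball1_Z2 = f (z24_zero a b) + sum f (unit2 ` {..<a})"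
    unfolding ball1_Z2_def by (intro sum.insert) auto
  also have "sum f (unit2 ` {..<a}) = (\<Sum>i<a. f (unit2 i))"
    using sum.reindex[OF unit2_inj, of f] by (simp only: comp_def)
  finally show ?thesis .
qed

lemma sum_ball1:
  fixes f :: "int list \<times> int list \<Rightarrow> 'a::comm_monoid_add"
  shows "sum f ball1 = sum f ball1_Z2 + (\<Sum>j<b. f (unit4 1 j) + f (unit4 3 j))"
proof -
  have "ball1 = ball1_Z2 \<union> (unit4 1 ` {..<b} \<union> unit4 3 ` {..<b})"
    by (auto simp: ball1_eq ball1_Z2_def)
  moreover have "ball1_Z2 \<inter> (unit4 1 ` {..<b} \<union> unit4 3 ` {..<b}) = {}"
  proof -
    have "unit4 k j \<notin> ball1_Z2" if "j < b" "k \<noteq> 0" for k j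
    proof
      assume "unit4 k j \<in> ball1_Z2"
      then have "snd (unit4 k j) ! j = 0"
        using \<open>j < b\<close> by (simp add: snd_ball1_Z2)
      with that show False by (simp add: snd_unit4)
    qed
    then show ?thesis by auto
  qed
  moreover have "unit4 1 ` {..<b} \<inter> unit4 3 ` {..<b} = {}"
    by (auto simp: image_iff unit4_3_neq_unit4_1)
  moreover have "sum f (unit4 k ` {..<b}) = (\<Sum>j<b. f (unit4 k j))" if "k \<noteq> 0" for k
    using sum.reindex[OF unit4_inj[OF that], of f] by (simp only: comp_def)
  moreover have "finite ball1_Z2"
    by (simp add: ball1_Z2_def)
  ultimately show ?thesis
    by (simp add: sum.union_disjoint sum.distrib)
qed

lemma double_unit4_odd: "k \<in> {1,3} \<Longrightarrow> z24_add (unit4 k j) (unit4 k j) = unit4 2 j"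
  by (auto simp: unit4_def z24_add_def zip_update map_update)

lemma double_unit4_2: "z24_add (unit4 2 j) (unit4 2 j) = z24_zero a b"
  by (cases "j < b")
    (simp_all add: unit4_def z24_add_def z24_zero_def zip_update map_update list_update_same_conv
      list_update_beyond)

lemma unit4_2_add_unit4_3: "z24_add (unit4 2 j) (unit4 3 j) = unit4 1 j"
  by (simp add: unit4_def z24_add_def zip_update map_update)

lemma double_ball1_Z2: "e \<in> ball1_Z2 \<Longrightarrow> z24_add e e = z24_zero a b"
  by (auto simp: ball1_Z2_def unit2_def z24_add_def z24_zero_def zip_update map_update
      list_update_same_conv list_update_beyond)

lemma lee_weight_eq_0_iff: "v \<in> V \<Longrightarrow> lee_weight v = 0 \<longleftrightarrow> v = z24_zero a b"
proof
  assume "v \<in> V" "lee_weight v = 0"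
  then have "v \<in> ball1" by (simp add: ball1_def)
  with \<open>lee_weight v = 0\<close> show "v = z24_zero a b"
    unfolding ball1_eq by (auto simp: lee_weight_unit2 lee_weight_unit4)
qed (simp add: lee_weight_zero)

lemma Gray_inj_on: "inj_on Gray V"
proof (rule inj_onI)
  fix v w assume v: "v \<in> V" and w: "w \<in> V" and "Gray v = Gray w"
  then have "lee_weight (z24_diff v w) = 0"
    by (simp flip: Gray_isometry add: hamming_def)
  then have diff: "z24_diff v w = z24_zero a b"
    using v w by (simp add: lee_weight_eq_0_iff z24_add_closed z24_neg_closed)
  have "v = z24_add w (z24_diff v w)"
    using v w by (simp add: z24_add_diff_cancel)
  also have "\<dots> = z24_add (z24_zero a b) w"
    unfolding diff by (rule z24_add_commute)
  finally show "v = w"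
    using w by (simp add: z24_add_zero_left)
qed

end

locale Z2Z4_perfect_code = Z2Z4_space +
  fixes C :: "(int list \<times> int list) set"
  assumes additive: "Z2Z4_additive a b C"
    and perfect: "Z2Z4_perfect1 a b C"
begin

lemma code_subset: "C \<subseteq> V"
  and code_zero: "z24_zero a b \<in> C"
  and code_add_closed: "c \<in> C \<Longrightarrow> c' \<in> C \<Longrightarrow> z24_add c c' \<in> C"
  and code_neg_closed: "c \<in> C \<Longrightarrow> z24_neg c \<in> C"
  using additive by (auto simp: Z2Z4_additive_def)

lemma finite_code: "finite C"
  using code_subset finite_Z2Z4space by (rule finite_subset)

lemma card_code_neq_0: "card C \<noteq> 0"
  using finite_code code_zero by auto

lemma Gray_closed: "v \<in> V \<Longrightarrow> Gray v \<in> Z2vecs (a + 2 * b)"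
  by (auto simp: Z2Z4space_def Z2vecs_def Z4vecs_def Gray_def gray_def length_concat_map_gray)

lemma ex1_codeword_diff_in_ball1:
  assumes v: "v \<in> V" shows "\<exists>!c. c \<in> C \<and> z24_diff v c \<in> ball1"
proof -
  have close: "z24_diff v c \<in> ball1 \<longleftrightarrow> hamming (Gray v) (Gray c) \<le> 1" if "c \<in> C" for c
  proof -
    have "c \<in> V" using that code_subset by blast
    with v show ?thesis
      by (simp add: ball1_def Gray_isometry z24_add_closed z24_neg_closed)
  qed
  have "\<exists>!g. g \<in> Gray ` C \<and> hamming (Gray v) g \<le> 1"
    using perfect Gray_closed[OF v] unfolding Z2Z4_perfect1_def perfect1_def by blast
  then obtain g where g: "g \<in> Gray ` C" "hamming (Gray v) g \<le> 1"
    and g_unique: "\<forall>g'. g' \<in> Gray ` C \<and> hamming (Gray v) g' \<le> 1 \<longrightarrow> g' = g"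
    by (elim ex1E) blast
  then obtain c where c: "c \<in> C" "g = Gray c" by blast
  show ?thesis
  proof (rule ex1I[of _ c])
    show "c \<in> C \<and> z24_diff v c \<in> ball1"
      using c g close by simp
  next
    fix c' assume c': "c' \<in> C \<and> z24_diff v c' \<in> ball1"
    then have "hamming (Gray v) (Gray c') \<le> 1"
      using close by blast
    then have "Gray c' = Gray c"
      using c c' g_unique by blast
    then show "c' = c"
      using c c' code_subset inj_onD[OF Gray_inj_on] by blast
  qed
qed

abbreviation translate :: "(int list \<times> int list) \<times> (int list \<times> int list) \<Rightarrow> int list \<times> int list" where
  "translate \<equiv> \<lambda>(c, e). z24_add c e"

lemma coset_decomposition: "bij_betw translate (C \<times> ball1) V"
proof (rule bij_betwI')
  fix p q assume p: "p \<in> C \<times> ball1" and q: "q \<in> C \<times> ball1"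
  obtain c e c' e' where pq: "p = (c, e)" "q = (c', e')" by (cases p; cases q)
  with p q have V: "c \<in> V" "e \<in> V" "c' \<in> V" "e' \<in> V"
    using code_subset by (auto simp: ball1_def)
  show "translate p = translate q \<longleftrightarrow> p = q"
  proof
    assume eq: "translate p = translate q"
    define v where "v = z24_add c e"
    have v': "v = z24_add c' e'"
      using eq by (simp add: v_def pq)
    have v: "v \<in> V" "z24_diff v c = e"
      using V by (simp_all add: v_def z24_add_closed z24_add_diff_cancel_left)
    moreover have "z24_diff v c' = e'"
      using V by (simp add: v' z24_add_diff_cancel_left)
    ultimately have "c = c'"
      using p q ex1_codeword_diff_in_ball1[OF v(1)] by (auto simp: pq)
    with v \<open>z24_diff v c' = e'\<close> show "p = q" by (simp add: pq)
  qed simp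
next
  fix p assume "p \<in> C \<times> ball1"
  then show "translate p \<in> V"
    using code_subset by (auto simp: ball1_def z24_add_closed)
next
  fix v assume "v \<in> V"
  then obtain c where "c \<in> C" "z24_diff v c \<in> ball1"
    using ex1_codeword_diff_in_ball1 by blast
  moreover have "v = translate (c, z24_diff v c)"
    using \<open>v \<in> V\<close> \<open>c \<in> C\<close> code_subset by (auto simp: z24_add_diff_cancel)
  ultimately show "\<exists>p\<in>C \<times> ball1. v = translate p" by blast
qed

lemma sum_translates:
  fixes f :: "int list \<times> int list \<Rightarrow> 'a::comm_semiring_1"
  assumes mult: "\<And>v w. v \<in> V \<Longrightarrow> w \<in> V \<Longrightarrow> f (z24_add v w) = f v * f w"
    and trivial: "\<And>c. c \<in> C \<Longrightarrow> f c = 1"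
    and F: "F \<subseteq> ball1"
  shows "(\<Sum>v\<in>translate ` (C \<times> F). f v) = of_nat (card C) * sum f F"
proof -
  have "inj_on translate (C \<times> F)"
    using coset_decomposition F by (auto simp: bij_betw_def intro: inj_on_subset)
  then have "(\<Sum>v\<in>translate ` (C \<times> F). f v) = (\<Sum>c\<in>C. \<Sum>e\<in>F. f (z24_add c e))"
    by (simp add: sum.reindex sum.cartesian_product case_prod_unfold)
  also have "\<dots> = (\<Sum>c\<in>C. \<Sum>e\<in>F. f e)"
  proof (intro sum.cong refl)
    fix c e assume "c \<in> C" "e \<in> F"
    with F code_subset have "c \<in> V" "e \<in> V" by (auto simp: ball1_def)
    with mult trivial[OF \<open>c \<in> C\<close>] show "f (z24_add c e) = f e" by simp
  qed
  finally show ?thesis by simp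
qed

lemma sum_ball1_eq_0:
  fixes f :: "int list \<times> int list \<Rightarrow> 'a::{idom,ring_char_0}"
  assumes mult: "\<And>v w. v \<in> V \<Longrightarrow> w \<in> V \<Longrightarrow> f (z24_add v w) = f v * f w"
    and trivial: "\<And>c. c \<in> C \<Longrightarrow> f c = 1"
    and s: "s \<in> V" "f s \<noteq> 1"
  shows "sum f ball1 = 0"
proof -
  have "sum f V = 0"
    using s mult by (intro sum_translation_invariant_eq_0[of V a b s]) (auto simp: z24_add_closed)
  moreover have "sum f V = of_nat (card C) * sum f ball1"
    using sum_translates[OF mult trivial, of ball1] coset_decomposition by (simp add: bij_betw_def)
  ultimately show ?thesis
    using card_code_neq_0 by simp
qed

text \<open>Otherwise \<open>unit4 1 j\<close> and \<open>unit4 3 j\<close> would lie in the same coset of \<open>C\<close>.\<close>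

lemma unit4_2_notin_code: "j < b \<Longrightarrow> unit4 2 j \<notin> C"
proof
  assume "j < b" "unit4 2 j \<in> C"
  then have "(unit4 2 j, unit4 3 j) \<in> C \<times> ball1" "(z24_zero a b, unit4 1 j) \<in> C \<times> ball1"
    by (auto simp: code_zero ball1_eq)
  moreover have "translate (unit4 2 j, unit4 3 j) = translate (z24_zero a b, unit4 1 j)"
    using \<open>j < b\<close> by (simp add: unit4_2_add_unit4_3 z24_add_zero_left unit4_closed)
  ultimately have "unit4 3 j = unit4 1 j"
    using inj_onD[OF bij_betw_imp_inj_on[OF coset_decomposition]] by blast
  with \<open>j < b\<close> show False
    using unit4_3_neq_unit4_1 by blast
qed

lemma half_code_decomposition: "{v \<in> V. z24_add v v \<in> C} = translate ` (C \<times> ball1_Z2)"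
proof (intro set_eqI iffI)
  fix v assume "v \<in> translate ` (C \<times> ball1_Z2)"
  then obtain c e where ce: "c \<in> C" "e \<in> ball1_Z2" "v = z24_add c e" by auto
  then have "c \<in> V" "e \<in> V"
    using code_subset ball1_Z2_subset by (auto simp: ball1_def)
  moreover have "z24_add v v = z24_add c c"
    using ce \<open>c \<in> V\<close>
    by (simp add: z24_double_add double_ball1_Z2 z24_add_commute[of "z24_add c c"]
        z24_add_zero_left z24_add_closed)
  ultimately show "v \<in> {v \<in> V. z24_add v v \<in> C}"
    using ce by (simp add: z24_add_closed code_add_closed)
next
  fix v assume "v \<in> {v \<in> V. z24_add v v \<in> C}"
  then have v: "v \<in> V" "z24_add v v \<in> C" by auto
  then obtain c e where ce: "c \<in> C" "e \<in> ball1" "v = z24_add c e"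
    using coset_decomposition by (force simp: bij_betw_def)
  have "e \<in> ball1_Z2"
  proof (rule ccontr)
    assume "e \<notin> ball1_Z2"
    then obtain k j where kj: "k \<in> {1,3}" "j < b" "e = unit4 k j"
      using ce(2) by (auto simp: ball1_eq ball1_Z2_def)
    have "c \<in> V" using ce code_subset by auto
    have "z24_add v v = z24_add (z24_add c c) (unit4 2 j)"
      using ce kj by (simp add: z24_double_add double_unit4_odd)
    moreover have "unit4 2 j \<in> V"
      using kj by (simp add: unit4_closed)
    ultimately have "unit4 2 j = z24_diff (z24_add v v) (z24_add c c)"
      using z24_add_diff_cancel_left[OF z24_add_closed[OF \<open>c \<in> V\<close> \<open>c \<in> V\<close>]] by simp
    then have "unit4 2 j \<in> C"
      using v ce by (simp add: code_add_closed code_neg_closed)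
    with \<open>j < b\<close> show False
      by (simp add: unit4_2_notin_code)
  qed
  with ce show "v \<in> translate ` (C \<times> ball1_Z2)" by auto
qed

lemma sum_ball1_Z2_eq_0:
  fixes f :: "int list \<times> int list \<Rightarrow> 'a::{idom,ring_char_0}"
  assumes mult: "\<And>v w. v \<in> V \<Longrightarrow> w \<in> V \<Longrightarrow> f (z24_add v w) = f v * f w"
    and trivial: "\<And>c. c \<in> C \<Longrightarrow> f c = 1"
    and j: "j < b" "f (unit4 2 j) \<noteq> 1"
  shows "sum f ball1_Z2 = 0"
proof -
  have u: "unit4 2 j \<in> V"
    using j by (simp add: unit4_closed)
  have "z24_add (unit4 2 j) v \<in> {v \<in> V. z24_add v v \<in> C}" if "v \<in> {v \<in> V. z24_add v v \<in> C}" for v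
  proof -
    have "z24_add (z24_add (unit4 2 j) v) (z24_add (unit4 2 j) v)
        = z24_add (z24_add (unit4 2 j) (unit4 2 j)) (z24_add v v)"
      by (rule z24_double_add)
    also have "\<dots> = z24_add v v"
      using that by (simp add: double_unit4_2 z24_add_closed z24_add_zero_left)
    finally show ?thesis
      using that u by (simp add: z24_add_closed)
  qed
  then have "sum f {v \<in> V. z24_add v v \<in> C} = 0"
    using u j mult by (intro sum_translation_invariant_eq_0[of _ a b "unit4 2 j"]) auto
  moreover have "sum f {v \<in> V. z24_add v v \<in> C} = of_nat (card C) * sum f ball1_Z2"
    unfolding half_code_decomposition by (rule sum_translates[OF mult trivial ball1_Z2_subset])
  ultimately show ?thesis
    using card_code_neq_0 by simp
qed

end

lemma sum_if_eq_card:
  fixes n :: nat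
  shows "(\<Sum>j<n. if P j then c else 0) = of_nat (card {j. j < n \<and> P j}) * (c :: 'a::comm_semiring_1)"
proof -
  have "(\<Sum>j<n. if P j then c else 0) = sum (\<lambda>_. c) {j \<in> {..<n}. P j}"
    by (rule sum.inter_filter[symmetric]) simp
  also have "{j \<in> {..<n}. P j} = {j. j < n \<and> P j}"
    by auto
  finally show ?thesis by simp
qed

locale Z2Z4_perfect_code_dual_word = Z2Z4_perfect_code +
  fixes x y :: "int list"
  assumes dual_word: "(x, y) \<in> Z2Z4_dual a b C"
    and order_4: "z24_add (x, y) (x, y) \<noteq> z24_zero a b"
begin

abbreviation chi :: "int list \<times> int list \<Rightarrow> complex" where
  "chi \<equiv> z24_char (x, y)"

lemma dual_word_closed: "(x, y) \<in> V"
  using dual_word by (simp add: Z2Z4_dual_def)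

lemma length_y: "length y = b"
  using dual_word_closed by (simp add: mem_Z2Z4space_iff)

lemma y_range: "j < b \<Longrightarrow> y ! j \<in> {0,1,2,3}"
  using dual_word_closed by (simp add: mem_Z2Z4space_iff)

lemma odd_coordinate: "\<exists>j<b. y ! j \<in> {1,3}"
proof (rule ccontr)
  assume "\<not> (\<exists>j<b. y ! j \<in> {1,3})"
  then have even: "j < b \<Longrightarrow> y ! j \<in> {0,2}" for j
    using y_range by blast
  have "z24_add (x, y) (x, y) = z24_zero a b"
  proof (rule Z2Z4space_eqI)
    show "z24_add (x, y) (x, y) \<in> V" "z24_zero a b \<in> V"
      using dual_word_closed by (simp_all add: z24_add_closed z24_zero_closed)
  next
    fix i assume "i < a"
    then show "fst (z24_add (x, y) (x, y)) ! i = fst (z24_zero a b) ! i"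
      using dual_word_closed by (auto simp: mem_Z2Z4space_iff z24_add_def z24_zero_def)
  next
    fix j assume "j < b"
    then show "snd (z24_add (x, y) (x, y)) ! j = snd (z24_zero a b) ! j"
      using dual_word_closed even[of j] by (auto simp: mem_Z2Z4space_iff z24_add_def z24_zero_def)
  qed
  with order_4 show False by contradiction
qed

lemma chi_add: "v \<in> V \<Longrightarrow> w \<in> V \<Longrightarrow> chi (z24_add v w) = chi v * chi w"
  by (rule z24_char_add)

lemma chi_code: "c \<in> C \<Longrightarrow> chi c = 1"
  using dual_word by (rule z24_char_dual)

lemma chi_zero: "chi (z24_zero a b) = 1"
  using chi_code code_zero by blast

lemma chi_unit2_squared: "i < a \<Longrightarrow> (chi (unit2 i))\<^sup>2 = 1"
proof -
  assume "i < a"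
  then have "(\<Sum>i'<a. fst (unit2 i) ! i' * x ! i') = x ! i"
    by (simp add: fst_unit2 if_distrib[of "\<lambda>t. t * _"] sum.delta cong: if_cong)
  moreover have "(\<Sum>j<b. snd (unit2 i) ! j * y ! j) = 0"
    by (simp add: snd_unit2)
  ultimately have "z24_inner (unit2 i) (x, y) = (2 * x ! i) mod 4"
    using z24_inner_eq[OF unit2_closed[OF \<open>i < a\<close>], of "(x, y)"] by simp
  moreover have "x ! i \<in> {0,1}"
    using dual_word_closed \<open>i < a\<close> by (simp add: mem_Z2Z4space_iff)
  ultimately show ?thesis
    by (auto simp: z24_char_def)
qed

lemma chi_unit4: "j < b \<Longrightarrow> k \<in> {0,1,2,3} \<Longrightarrow> chi (unit4 k j) = \<i> ^ nat ((k * y ! j) mod 4)"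
proof -
  assume "j < b" "k \<in> {0,1,2,3}"
  then have "(\<Sum>j'<b. snd (unit4 k j) ! j' * y ! j') = k * y ! j"
    by (simp add: snd_unit4 if_distrib[of "\<lambda>t. t * _"] sum.delta cong: if_cong)
  moreover have "(\<Sum>i<a. fst (unit4 k j) ! i * x ! i) = 0"
    by (simp add: fst_unit4)
  ultimately show ?thesis
    using z24_inner_eq[OF unit4_closed[OF \<open>j < b\<close> \<open>k \<in> {0,1,2,3}\<close>], of "(x, y)"]
    by (simp add: z24_char_def)
qed

lemma chi_unit4_1_add_chi_unit4_3:
  "j < b \<Longrightarrow>
   chi (unit4 1 j) + chi (unit4 3 j) = (if y ! j = 0 then 2 else 0) + (if y ! j = 2 then -2 else 0)"
  using y_range[of j] by (auto simp: chi_unit4 power2_eq_square power3_eq_cube)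

lemma chi_unit4_1_squared_add_chi_unit4_3_squared:
  "j < b \<Longrightarrow> (chi (unit4 1 j))\<^sup>2 + (chi (unit4 3 j))\<^sup>2 = 2 + (if y ! j \<in> {1,3} then -4 else 0)"
  using y_range[of j] by (auto simp: chi_unit4 power2_eq_square power3_eq_cube)

lemma sum_chi_ball1: "sum chi ball1 = 0"
proof -
  obtain j where j: "j < b" "y ! j \<in> {1,3}"
    using odd_coordinate by blast
  have "chi (unit4 1 j) \<noteq> 1"
    using j by (auto simp: chi_unit4 power3_eq_cube complex_eq_iff)
  with j show ?thesis
    by (intro sum_ball1_eq_0[of chi "unit4 1 j"]) (simp_all add: chi_add chi_code unit4_closed)
qed

lemma sum_chi_squared_ball1: "(\<Sum>v\<in>ball1. (chi v)\<^sup>2) = 0"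
proof -
  obtain j where j: "j < b" "y ! j \<in> {1,3}"
    using odd_coordinate by blast
  have "(chi (unit4 1 j))\<^sup>2 \<noteq> 1"
    using j by (auto simp: chi_unit4 power3_eq_cube power2_eq_square)
  with j show ?thesis
    by (intro sum_ball1_eq_0[of "\<lambda>v. (chi v)\<^sup>2" "unit4 1 j"])
       (simp_all add: chi_add chi_code unit4_closed power_mult_distrib)
qed

lemma sum_chi_ball1_Z2: "sum chi ball1_Z2 = 0"
proof -
  obtain j where j: "j < b" "y ! j \<in> {1,3}"
    using odd_coordinate by blast
  have "chi (unit4 2 j) \<noteq> 1"
    using j by (auto simp: chi_unit4)
  with j show ?thesis
    by (intro sum_ball1_Z2_eq_0[of chi j]) (simp_all add: chi_add chi_code)
qed

lemma card_0_eq_card_2: "card {j. j < b \<and> y ! j = 0} = card {j. j < b \<and> y ! j = 2}"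
proof -
  have "0 = (\<Sum>j<b. chi (unit4 1 j) + chi (unit4 3 j))"
    using sum_ball1[of chi] sum_chi_ball1 sum_chi_ball1_Z2 by simp
  also have "\<dots> = (\<Sum>j<b. (if y ! j = 0 then 2 else 0) + (if y ! j = 2 then -2 else 0))"
    by (intro sum.cong refl) (simp add: chi_unit4_1_add_chi_unit4_3)
  also have "\<dots> = 2 * of_nat (card {j. j < b \<and> y ! j = 0})
      - 2 * of_nat (card {j. j < b \<and> y ! j = 2})"
    by (simp add: sum.distrib sum_if_eq_card)
  finally show ?thesis by simp
qed

lemma four_card_odd: "4 * card {j. j < b \<and> y ! j \<in> {1,3}} = 1 + a + 2 * b"
proof -
  have "sum (\<lambda>v. (chi v)\<^sup>2) ball1_Z2 = 1 + of_nat a"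
    by (simp add: sum_ball1_Z2 chi_zero chi_unit2_squared)
  moreover have "(\<Sum>j<b. (chi (unit4 1 j))\<^sup>2 + (chi (unit4 3 j))\<^sup>2)
      = (\<Sum>j<b. 2 + (if y ! j \<in> {1,3} then -4 else 0))"
    by (intro sum.cong refl) (simp add: chi_unit4_1_squared_add_chi_unit4_3_squared)
  ultimately have "of_nat (4 * card {j. j < b \<and> y ! j \<in> {1,3}})
      = (of_nat (1 + a + 2 * b) :: complex)"
    using sum_ball1[of "\<lambda>v. (chi v)\<^sup>2"] sum_chi_squared_ball1
    by (simp add: sum.distrib sum_if_eq_card) algebra
  then show ?thesis
    by (simp only: of_nat_eq_iff)
qed

lemma card_0_add_card_odd_add_card_2:
  "card {j. j < b \<and> y ! j = 0} + card {j. j < b \<and> y ! j \<in> {1,3}} + card {j. j < b \<and> y ! j = 2} = b"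
proof -
  let ?count = "\<lambda>j. (if y ! j = 0 then 1 else 0) + (if y ! j \<in> {1,3} then 1 else 0)
    + (if y ! j = 2 then 1 else (0::nat))"
  have "(\<Sum>j<b. 1) = (\<Sum>j<b. ?count j)"
    using y_range by (intro sum.cong refl) fastforce
  then show ?thesis
    by (simp add: sum.distrib sum_if_eq_card)
qed

end

lemma counts_for_Hamming_parameters:
  fixes r n0 n1 n2 :: nat
  assumes "r \<ge> 2"
    and n1: "4 * n1 = 1 + (2^r - 1) + 2 * (2^(r-1) * (2^r - 1))"
    and "n0 = n2"
    and total: "n0 + n1 + n2 = 2^(r-1) * (2^r - 1)"
  shows "n1 = 2^(2*r - 2) \<and> n0 = 2^(r-2) * (2^(r-1) - 1)"
proof -
  obtain k where r: "r = k + 2"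
    using le_Suc_ex[OF \<open>r \<ge> 2\<close>] by (auto simp: add.commute)
  obtain q where q: "(2::nat)^k = q + 1"
    using less_imp_Suc_add[of 0 "(2::nat)^k"] by auto
  have "2 * r - 2 = k + k + 2"
    using r by simp
  then have powers: "(2::nat)^r = 4 * q + 4" "(2::nat)^(r-1) = 2 * q + 2"
    "(2::nat)^(2*r-2) = 4 * (q + 1) * (q + 1)" "(2::nat)^(r-2) = q + 1"
    using q unfolding r
    by (simp_all add: power_add mult.commute[of 2 k] power_mult power2_eq_square algebra_simps)
  have "4 * n1 = 4 * (4 * (q + 1) * (q + 1))"
    using n1 unfolding powers by (simp add: algebra_simps)
  then have n1_eq: "n1 = 4 * (q + 1) * (q + 1)" by simp
  have "2 * n0 = 2 * ((q + 1) * (2 * q + 1))"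
    using total \<open>n0 = n2\<close> n1_eq unfolding powers by (simp add: algebra_simps)
  with n1_eq show ?thesis
    unfolding powers by simp
qed

theorem corollary3p6:
  fixes r :: nat and C D :: "(int list \<times> int list) set" and x y :: "int list"
  assumes "r \<ge> 2"
    and "Z2Z4_additive (2^r - 1) (2^(r-1) * (2^r - 1)) C"
    and "Z2Z4_perfect1 (2^r - 1) (2^(r-1) * (2^r - 1)) C"
    and "D = Z2Z4_dual (2^r - 1) (2^(r-1) * (2^r - 1)) C"
    and "Z2Z4_cyclic D"
    and "(x, y) \<in> D"
    and "z24_add (x, y) (x, y) \<noteq> z24_zero (2^r - 1) (2^(r-1) * (2^r - 1))"
  shows "card {j. j < length y \<and> y ! j \<in> {1, 3}} = 2^(2*r - 2)
       \<and> card {j. j < length y \<and> y ! j = 2} = 2^(r-2) * (2^(r-1) - 1)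
       \<and> card {j. j < length y \<and> y ! j = 0} = 2^(r-2) * (2^(r-1) - 1)"
proof -
  interpret Z2Z4_perfect_code_dual_word "2^r - 1" "2^(r-1) * (2^r - 1)" C x y
    using assms by unfold_locales auto
  have "card {j. j < length y \<and> y ! j \<in> {1,3}} = 2^(2*r - 2)
      \<and> card {j. j < length y \<and> y ! j = 0} = 2^(r-2) * (2^(r-1) - 1)"
    unfolding length_y
    using \<open>r \<ge> 2\<close> four_card_odd card_0_eq_card_2 card_0_add_card_odd_add_card_2
    by (rule counts_for_Hamming_parameters)
  with card_0_eq_card_2 show ?thesis
    unfolding length_y by simp
qed

end
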